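(* Let $G$ be a residually finite locally nilpotent group containing an element with finite centralizer. Then $G$ is finite. *)

theory Defs
  imports "HOL-Algebra.Algebra"
begin

definition centralizer :: "('a, 'b) monoid_scheme \<Rightarrow> 'a \<Rightarrow> 'a set" where
  "centralizer G x = {g \<in> carrier G. g \<otimes>\<^bsub>G\<^esub> x = x \<otimes>\<^bsub>G\<^esub> g}"

text \<open>Lower central series: gamma_1 = G (index 0 here), gamma_{i+1} = [gamma_i, G].\<close>
fun lower_central :: "('a, 'b) monoid_scheme \<Rightarrow> nat \<Rightarrow> 'a set" where
  "lower_central G 0 = carrier G"
| "lower_central G (Suc n) = generate G
     {a \<otimes>\<^bsub>G\<^esub> b \<otimes>\<^bsub>G\<^esub> inv\<^bsub>G\<^esub> a \<otimes>\<^bsub>G\<^esub> inv\<^bsub>G\<^esub> b | a b. a \<in> lower_central G n \<and> b \<in> carrier G}"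

definition nilpotent_group :: "('a, 'b) monoid_scheme \<Rightarrow> bool" where
  "nilpotent_group G \<longleftrightarrow> group G \<and> (\<exists>n. lower_central G n = {\<one>\<^bsub>G\<^esub>})"

definition locally_nilpotent :: "('a, 'b) monoid_scheme \<Rightarrow> bool" where
  "locally_nilpotent G \<longleftrightarrow> group G \<and>
     (\<forall>S. S \<subseteq> carrier G \<and> finite S \<longrightarrow> nilpotent_group (subgroup_generated G S))"

definition residually_finite :: "('a, 'b) monoid_scheme \<Rightarrow> bool" where
  "residually_finite G \<longleftrightarrow> group G \<and>
     (\<forall>g \<in> carrier G. g \<noteq> \<one>\<^bsub>G\<^esub> \<longrightarrow>
        (\<exists>N. N \<lhd> G \<and> finite (rcosets\<^bsub>G\<^esub> N) \<and> g \<notin> N))"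

end

theory Submission
  imports Defs
begin

text \<open>
  Pick, for each of the finitely many nontrivial elements c of the centralizer of x, a normal
  subgroup N_c of finite index not containing c, and let N be the intersection of the N_c.
  In a locally nilpotent group every nontrivial normal subgroup N meets the centralizer of x
  nontrivially: for 1 \<noteq> n \<in> N the commutators [n, x, ..., x] lie in N and in the lower central
  series of the nilpotent group generated by x and n, so they eventually vanish, and the last
  nontrivial one commutes with x. Hence N is trivial, and G embeds into the finite set of
  tuples of cosets of the N_c.
\<close>

fun iter_commutator :: "('a, 'b) monoid_scheme \<Rightarrow> 'a \<Rightarrow> 'a \<Rightarrow> nat \<Rightarrow> 'a" where
  "iter_commutator G n x 0 = n"
| "iter_commutator G n x (Suc i) =
     iter_commutator G n x i \<otimes>\<^bsub>G\<^esub> x \<otimes>\<^bsub>G\<^esub> inv\<^bsub>G\<^esub> (iter_commutator G n x i) \<otimes>\<^bsub>G\<^esub> inv\<^bsub>G\<^esub> x"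

lemma (in group) lower_central_subset: "lower_central G i \<subseteq> carrier G"
proof (induction i)
  case (Suc i)
  then show ?case
    unfolding lower_central.simps by (intro generate_incl) blast
qed simp

lemma (in group) iter_commutator_in_lower_central:
  assumes "n \<in> carrier G" "x \<in> carrier G"
  shows "iter_commutator G n x i \<in> lower_central G i"
proof (induction i)
  case (Suc i)
  then show ?case
    using assms(2) lower_central_subset unfolding lower_central.simps
    by (auto intro!: generate.incl)
qed (simp add: assms(1))

lemma (in group) iter_commutator_subgroup_generated:
  assumes "n \<in> carrier (subgroup_generated G S)" "x \<in> carrier (subgroup_generated G S)"
  shows "iter_commutator (subgroup_generated G S) n x i = iter_commutator G n x i"
proof (induction i)
  case (Suc i)
  interpret H: group "subgroup_generated G S" by simp
  have "iter_commutator G n x i \<in> carrier (subgroup_generated G S)"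
    using H.lower_central_subset H.iter_commutator_in_lower_central[OF assms, of i] Suc.IH
    by auto
  with assms(2) show ?case
    by (simp add: Suc.IH)
qed simp

lemma (in group) iter_commutator_in_normal:
  assumes "N \<lhd> G" "n \<in> N" "x \<in> carrier G"
  shows "iter_commutator G n x i \<in> N"
proof (induction i)
  case (Suc i)
  interpret N: normal N G by fact
  let ?c = "iter_commutator G n x i"
  have "x \<otimes> inv ?c \<otimes> inv x \<in> N"
    using Suc assms(3) by (simp add: N.inv_op_closed2)
  then have "?c \<otimes> (x \<otimes> inv ?c \<otimes> inv x) \<in> N"
    using Suc by simp
  then show ?case
    using Suc assms(3) by (simp add: m_assoc)
qed (simp add: assms(2))

lemma (in group) commute_if_commutator_eq_one:
  assumes "a \<in> carrier G" "b \<in> carrier G" "a \<otimes> b \<otimes> inv a \<otimes> inv b = \<one>"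
  shows "a \<otimes> b = b \<otimes> a"
proof -
  have "a \<otimes> b \<otimes> inv a = b"
    using assms by (metis inv_closed m_closed inv_solve_right l_one)
  then show ?thesis
    using assms by (metis inv_closed m_closed inv_solve_right)
qed

lemma (in group) locally_nilpotent_iter_commutator_vanishes:
  assumes "locally_nilpotent G" "n \<in> carrier G" "x \<in> carrier G"
  shows "\<exists>m. iter_commutator G n x m = \<one>"
proof -
  let ?H = "subgroup_generated G {n, x}"
  have "nilpotent_group ?H"
    using assms unfolding locally_nilpotent_def by auto
  then obtain m where m: "lower_central ?H m = {\<one>\<^bsub>?H\<^esub>}"
    unfolding nilpotent_group_def by blast
  have "n \<in> carrier ?H" "x \<in> carrier ?H"
    using assms(2,3) by (auto simp: carrier_subgroup_generated intro: generate.incl)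
  then have "iter_commutator G n x m \<in> lower_central ?H m"
    using group.iter_commutator_in_lower_central[of ?H] iter_commutator_subgroup_generated
    by (metis group_subgroup_generated)
  with m show ?thesis by auto
qed

lemma (in group) locally_nilpotent_normal_meets_centralizer:
  assumes "locally_nilpotent G" "N \<lhd> G" "n \<in> N" "n \<noteq> \<one>" "x \<in> carrier G"
  shows "\<exists>k \<in> N. k \<noteq> \<one> \<and> k \<in> centralizer G x"
proof -
  have n: "n \<in> carrier G"
    using assms(2,3) normal_imp_subgroup subgroup.mem_carrier by metis
  obtain m where "iter_commutator G n x m = \<one>"
    using locally_nilpotent_iter_commutator_vanishes[OF assms(1) n assms(5)] by blast
  moreover have "iter_commutator G n x 0 \<noteq> \<one>"
    using assms(4) by simp
  ultimately obtain k where
    k: "iter_commutator G n x k \<noteq> \<one>" "iter_commutator G n x (Suc k) = \<one>"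
    using ex_least_nat_less[of "\<lambda>i. iter_commutator G n x i = \<one>" m] by blast
  let ?c = "iter_commutator G n x k"
  have "?c \<in> N"
    using iter_commutator_in_normal[OF assms(2,3,5)] .
  moreover have c: "?c \<in> carrier G"
    using calculation assms(2) normal_imp_subgroup subgroup.mem_carrier by metis
  moreover have "?c \<otimes> x = x \<otimes> ?c"
    using k(2) by (intro commute_if_commutator_eq_one[OF c assms(5)]) (simp only: iter_commutator.simps)
  ultimately show ?thesis
    using k(1) unfolding centralizer_def by blast
qed

lemma (in group) normal_Inter:
  assumes "\<And>i. i \<in> I \<Longrightarrow> N i \<lhd> G"
  shows "carrier G \<inter> (\<Inter>i\<in>I. N i) \<lhd> G"
  unfolding normal_inv_iff
proof (intro conjI ballI)
  have "carrier G \<inter> (\<Inter>i\<in>I. N i) = \<Inter>(insert (carrier G) (N ` I))"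
    by auto
  also have "subgroup \<dots> G"
    using assms normal_imp_subgroup subgroup_self by (intro subgroups_Inter) auto
  finally show "subgroup (carrier G \<inter> (\<Inter>i\<in>I. N i)) G" .
next
  fix g h assume "g \<in> carrier G" "h \<in> carrier G \<inter> (\<Inter>i\<in>I. N i)"
  then show "g \<otimes> h \<otimes> inv g \<in> carrier G \<inter> (\<Inter>i\<in>I. N i)"
    using assms by (auto intro: normal.inv_op_closed2)
qed

lemma (in group) finite_carrier_if_finite_index_Inter_trivial:
  assumes "finite I"
    and "\<And>i. i \<in> I \<Longrightarrow> subgroup (H i) G"
    and "\<And>i. i \<in> I \<Longrightarrow> finite (rcosets (H i))"
    and "carrier G \<inter> (\<Inter>i\<in>I. H i) \<subseteq> {\<one>}"
  shows "finite (carrier G)"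
proof -
  define cosets where "cosets y = (\<lambda>i\<in>I. H i #> y)" for y
  have "inj_on cosets (carrier G)"
  proof (rule inj_onI)
    fix y z assume y: "y \<in> carrier G" and z: "z \<in> carrier G" and eq: "cosets y = cosets z"
    have "y \<otimes> inv z \<in> H i" if i: "i \<in> I" for i
    proof -
      have "y \<in> H i #> z"
        using eq i rcos_self[OF y assms(2)[OF i]] unfolding cosets_def
        by (metis restrict_apply')
      then show ?thesis
        using subgroup.rcos_module_imp[OF assms(2)[OF i] is_group z] by blast
    qed
    then have "y \<otimes> inv z \<in> carrier G \<inter> (\<Inter>i\<in>I. H i)"
      using y z by simp
    then have "y \<otimes> inv z = \<one>"
      using assms(4) by blast
    then show "y = z"
      using y z by (metis inv_solve_right l_one one_closed)
  qed
  moreover have "cosets y \<in> Pi\<^sub>E I (\<lambda>i. rcosets (H i))" if "y \<in> carrier G" for y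
    unfolding cosets_def restrict_PiE_iff using that assms(2) subgroup.subset
    by (blast intro: rcosetsI)
  then have "cosets ` carrier G \<subseteq> Pi\<^sub>E I (\<lambda>i. rcosets (H i))"
    by blast
  moreover have "finite (Pi\<^sub>E I (\<lambda>i. rcosets (H i)))"
    using assms(1,3) by (rule finite_PiE)
  ultimately show ?thesis
    by (metis finite_imageD finite_subset)
qed

theorem lemma2p4:
  fixes G :: "('a, 'b) monoid_scheme"
  assumes "group G"
    and "residually_finite G"
    and "locally_nilpotent G"
    and "\<exists>x \<in> carrier G. finite (centralizer G x)"
  shows "finite (carrier G)"
proof -
  interpret group G by fact
  obtain x where x: "x \<in> carrier G" "finite (centralizer G x)"
    using assms(4) by blast
  define C where "C = centralizer G x - {\<one>\<^bsub>G\<^esub>}"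
  have "\<forall>c \<in> C. \<exists>M. M \<lhd> G \<and> finite (rcosets\<^bsub>G\<^esub> M) \<and> c \<notin> M"
    using assms(2) unfolding residually_finite_def C_def centralizer_def by blast
  then obtain N where N: "\<And>c. c \<in> C \<Longrightarrow> N c \<lhd> G \<and> finite (rcosets\<^bsub>G\<^esub> (N c)) \<and> c \<notin> N c"
    by metis
  have Inter_normal: "carrier G \<inter> (\<Inter>c\<in>C. N c) \<lhd> G"
    using N by (intro normal_Inter) blast
  have "carrier G \<inter> (\<Inter>c\<in>C. N c) \<subseteq> {\<one>\<^bsub>G\<^esub>}"
    using locally_nilpotent_normal_meets_centralizer[OF assms(3) Inter_normal _ _ x(1)] N
    unfolding C_def by blast
  moreover have "finite C"
    using x(2) unfolding C_def by blast
  ultimately show ?thesis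
    using N normal_imp_subgroup by (intro finite_carrier_if_finite_index_Inter_trivial[of C N]) auto
qed

end
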